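(* Let $\alpha\in(0,1]$ and $\beta\in(0,\alpha)$. Let $\Psi:\mathbb{R}^d\to\mathbb{R}^d$ send stable leaves to stable leaves and have finite best Lipschitz constant $L$. Then for every $K\in\mathcal{K}$, the function $K\circ\Psi$ belongs to $\mathcal{K}$ and $\|K\circ\Psi\|\le3\max(1,L)\|K\|$.
   Context: $\mathbb{R}^d=\mathbb{R}^{d_u}\times\mathbb{R}^{d_s}$ with points $(x,y)$; the stable leaves are the sets $\{x\}\times\mathbb{R}^{d_s}$, and $\Psi$ sends stable leaves to stable leaves if it maps each stable leaf into a stable leaf. $\mathcal{K}=\mathcal{K}^{\alpha,\beta}$ is the class of matrix-valued functions $K$ on $\mathbb{R}^d$ for which there is a constant $C$ such that for all $x,x'\in\mathbb{R}^{d_u}$, $y,y'\in\mathbb{R}^{d_s}$: $|K(x,y)|\le C$; $|K(x,y)-K(x',y)|\le C|x-x'|^\beta$; $|K(x,y)-K(x,y')|\le C|y-y'|^\alpha$; $|K(x,y)-K(x',y)-K(x,y')+K(x',y')|\le C|x-x'|^\beta|y-y'|^{\alpha-\beta}$. For $K\in\mathcal{K}$, $\|K\|$ is the smallest such $C$. *)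

theory Defs
  imports "HOL-Analysis.Analysis"
begin

text \<open>Points of R^d = R^{d_u} x R^{d_s} are pairs (x,y) with x :: real^'u, y :: real^'s.
  Matrix-valued functions take values in real^'n^'m (matrices), with the HOL-Analysis norm.\<close>

definition K_bounds ::
  "real \<Rightarrow> real \<Rightarrow> ((real^'u) \<times> (real^'s) \<Rightarrow> real^'n^'m) \<Rightarrow> real \<Rightarrow> bool" where
  "K_bounds \<alpha> \<beta> K C \<longleftrightarrow>
     (\<forall>x x' y y'.
        norm (K (x, y)) \<le> C \<and>
        norm (K (x, y) - K (x', y)) \<le> C * norm (x - x') powr \<beta> \<and>
        norm (K (x, y) - K (x, y')) \<le> C * norm (y - y') powr \<alpha> \<and>
        norm (K (x, y) - K (x', y) - K (x, y') + K (x', y'))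
          \<le> C * norm (x - x') powr \<beta> * norm (y - y') powr (\<alpha> - \<beta>))"

definition Kclass ::
  "real \<Rightarrow> real \<Rightarrow> ((real^'u) \<times> (real^'s) \<Rightarrow> real^'n^'m) set" where
  "Kclass \<alpha> \<beta> = {K. \<exists>C. K_bounds \<alpha> \<beta> K C}"

definition Knorm ::
  "real \<Rightarrow> real \<Rightarrow> ((real^'u) \<times> (real^'s) \<Rightarrow> real^'n^'m) \<Rightarrow> real" where
  "Knorm \<alpha> \<beta> K = Inf {C. K_bounds \<alpha> \<beta> K C}"

definition sends_stable_leaves :: "((real^'u) \<times> (real^'s) \<Rightarrow> (real^'u) \<times> (real^'s)) \<Rightarrow> bool" where
  "sends_stable_leaves \<Psi> \<longleftrightarrow> (\<forall>x. \<exists>x'. \<Psi> ` ({x} \<times> UNIV) \<subseteq> {x'} \<times> UNIV)"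

definition best_lipschitz :: "('a::metric_space \<Rightarrow> 'b::metric_space) \<Rightarrow> real" where
  "best_lipschitz f = Inf {C. lipschitz_on C UNIV f}"

end

theory Submission
  imports Defs
begin

text \<open>Since \<open>\<Psi>\<close> preserves stable leaves, \<open>\<Psi>(x, y) = (u x, s x y)\<close>, where \<open>u\<close> and both partial
  maps of \<open>s\<close> are \<open>M\<close>-Lipschitz with \<open>M = max 1 L\<close>.  The only coupling is that moving \<open>x\<close> also moves
  the stable coordinate, which \<open>K\<close> controls merely to order \<open>\<alpha>\<close>; boundedness of \<open>K\<close> trades this for
  order \<open>\<beta>\<close>, as \<open>min 1 (t^\<alpha>) \<le> t^\<beta>\<close>.  In the mixed difference one splits off a mixed difference
  of \<open>K\<close> itself; the rest is a second difference of \<open>K\<close> inside the single leaf of \<open>u x'\<close>, bounded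
  both by \<open>2\<parallel>K\<parallel>(M|x - x'|)^\<alpha>\<close> and by \<open>2\<parallel>K\<parallel>(M|y - y'|)^\<alpha>\<close>, and the minimum of the two is at most
  \<open>2\<parallel>K\<parallel>(M|x - x'|)^\<beta>(M|y - y'|)^(\<alpha>-\<beta>)\<close>.\<close>

lemma min_one_powr_le_powr:
  fixes t \<alpha> \<beta> :: real
  assumes "0 \<le> t" "0 \<le> \<beta>" "\<beta> \<le> \<alpha>"
  shows "min 1 (t powr \<alpha>) \<le> t powr \<beta>"
proof (cases "t \<le> 1")
  case True
  then have "t powr \<alpha> \<le> t powr \<beta>" using assms by (intro powr_mono') auto
  then show ?thesis by simp
next
  case False
  then have "1 \<le> t powr \<beta>" using assms by (intro ge_one_powr_ge_zero) auto
  then show ?thesis by simp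
qed

lemma min_powr_le_powr_mult_powr:
  fixes a b \<alpha> \<beta> :: real
  assumes "0 \<le> a" "0 \<le> b" "0 \<le> \<beta>" "\<beta> \<le> \<alpha>"
  shows "min (a powr \<alpha>) (b powr \<alpha>) \<le> a powr \<beta> * b powr (\<alpha> - \<beta>)"
proof (cases "a \<le> b")
  case True
  have "a powr \<alpha> = a powr \<beta> * a powr (\<alpha> - \<beta>)"
    by (simp add: powr_add [symmetric])
  also have "\<dots> \<le> a powr \<beta> * b powr (\<alpha> - \<beta>)"
    using True assms by (intro mult_left_mono powr_mono2) auto
  finally show ?thesis by simp
next
  case False
  have "b powr \<alpha> = b powr \<beta> * b powr (\<alpha> - \<beta>)"
    by (simp add: powr_add [symmetric])
  also have "\<dots> \<le> a powr \<beta> * b powr (\<alpha> - \<beta>)"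
    using False assms by (intro mult_right_mono powr_mono2) auto
  finally show ?thesis by simp
qed

lemma powr_scale_le:
  fixes M d e :: real
  assumes "1 \<le> M" "0 \<le> d" "e \<le> 1"
  shows "(M * d) powr e \<le> M * d powr e"
proof -
  have "(M * d) powr e = M powr e * d powr e"
    using assms by (simp add: powr_mult)
  also have "\<dots> \<le> M powr 1 * d powr e"
    using assms by (intro mult_right_mono powr_mono) auto
  finally show ?thesis using assms by simp
qed

lemma powr_scale_mult_le:
  fixes M p q \<alpha> \<beta> :: real
  assumes "1 \<le> M" "0 \<le> p" "0 \<le> q" "\<alpha> \<le> 1"
  shows "(M * p) powr \<beta> * (M * q) powr (\<alpha> - \<beta>) \<le> M * (p powr \<beta> * q powr (\<alpha> - \<beta>))"
proof -
  have "(M * p) powr \<beta> * (M * q) powr (\<alpha> - \<beta>) = M powr \<alpha> * (p powr \<beta> * q powr (\<alpha> - \<beta>))"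
    using assms by (simp add: powr_mult powr_add [symmetric] algebra_simps)
  also have "\<dots> \<le> M powr 1 * (p powr \<beta> * q powr (\<alpha> - \<beta>))"
    using assms by (intro mult_right_mono powr_mono) auto
  finally show ?thesis using assms by simp
qed

lemma lipschitz_on_best_lipschitz:
  fixes f :: "'a::metric_space \<Rightarrow> 'b::metric_space"
  assumes "lipschitz_on C UNIV f"
  shows "lipschitz_on (best_lipschitz f) UNIV f"
proof (rule lipschitz_onI)
  define S where "S = {C. lipschitz_on C UNIV f}"
  have S_ne: "S \<noteq> {}" using assms by (auto simp: S_def)
  have best: "best_lipschitz f = Inf S" by (simp add: best_lipschitz_def S_def)
  show "0 \<le> best_lipschitz f"
    unfolding best using S_ne by (intro cInf_greatest) (auto simp: S_def lipschitz_on_def)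
  fix p q
  show "dist (f p) (f q) \<le> best_lipschitz f * dist p q"
  proof (cases "p = q")
    case False
    then have pos: "0 < dist p q" by simp
    have "dist (f p) (f q) / dist p q \<le> Inf S"
    proof (rule cInf_greatest [OF S_ne])
      fix C assume "C \<in> S"
      then have "dist (f p) (f q) \<le> C * dist p q" by (auto simp: S_def intro: lipschitz_onD)
      then show "dist (f p) (f q) / dist p q \<le> C" using pos by (simp add: divide_le_eq)
    qed
    then show ?thesis using pos by (simp add: best divide_le_eq)
  qed simp
qed

lemma lipschitz_on_UNIV_Pair_left:
  fixes f :: "'a::real_normed_vector \<times> 'b::real_normed_vector \<Rightarrow> 'c::real_normed_vector"
  assumes "lipschitz_on M UNIV f"
  shows "norm (f (x, y) - f (x', y)) \<le> M * norm (x - x')"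
  using lipschitz_onD [OF assms, of "(x, y)" "(x', y)"] by (simp add: dist_norm dist_Pair_Pair)

lemma lipschitz_on_UNIV_Pair_right:
  fixes f :: "'a::real_normed_vector \<times> 'b::real_normed_vector \<Rightarrow> 'c::real_normed_vector"
  assumes "lipschitz_on M UNIV f"
  shows "norm (f (x, y) - f (x, y')) \<le> M * norm (y - y')"
  using lipschitz_onD [OF assms, of "(x, y)" "(x, y')"] by (simp add: dist_norm dist_Pair_Pair)

lemma sends_stable_leaves_fst_eq:
  assumes "sends_stable_leaves \<Psi>"
  shows "fst (\<Psi> (x, y)) = fst (\<Psi> (x, y'))"
proof -
  obtain x' where "\<Psi> ` ({x} \<times> UNIV) \<subseteq> {x'} \<times> UNIV"
    using assms unfolding sends_stable_leaves_def by blast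
  then have "\<Psi> (x, y) \<in> {x'} \<times> UNIV" "\<Psi> (x, y') \<in> {x'} \<times> UNIV" by blast+
  then show ?thesis by (auto simp: mem_Times_iff)
qed

lemma K_bounds_nonneg:
  assumes "K_bounds \<alpha> \<beta> K C"
  shows "0 \<le> C"
  using assms norm_ge_zero order_trans unfolding K_bounds_def by blast

lemma K_bounds_norm_diff_le:
  assumes "K_bounds \<alpha> \<beta> K C"
  shows "norm (K p - K q) \<le> 2 * C"
proof -
  have "norm (K z) \<le> C" for z
    using assms unfolding K_bounds_def by (metis prod.collapse)
  then show ?thesis
    using norm_triangle_ineq4 [of "K p" "K q"] by (smt (verit))
qed

lemma K_bounds_second_diff_on_leaf:
  assumes K: "K_bounds \<alpha> \<beta> K C" and "0 \<le> \<alpha>"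
    and "norm (b1 - b2) \<le> r" "norm (b3 - b4) \<le> r"
    and "norm (b1 - b3) \<le> r'" "norm (b2 - b4) \<le> r'"
  shows "norm (K (a, b1) - K (a, b2) - K (a, b3) + K (a, b4)) \<le> 2 * C * min (r powr \<alpha>) (r' powr \<alpha>)"
proof -
  have leaf: "norm (K (a, b) - K (a, b')) \<le> C * t powr \<alpha>" if "norm (b - b') \<le> t" for b b' t
  proof -
    have "norm (K (a, b) - K (a, b')) \<le> C * norm (b - b') powr \<alpha>"
      using K unfolding K_bounds_def by blast
    also have "\<dots> \<le> C * t powr \<alpha>"
      using that \<open>0 \<le> \<alpha>\<close> K_bounds_nonneg [OF K] by (intro mult_left_mono powr_mono2) auto
    finally show ?thesis .
  qed
  let ?D = "K (a, b1) - K (a, b2) - K (a, b3) + K (a, b4)"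
  have "norm ?D \<le> norm (K (a, b1) - K (a, b2)) + norm (K (a, b3) - K (a, b4))"
    using norm_triangle_ineq4 [of "K (a, b1) - K (a, b2)" "K (a, b3) - K (a, b4)"]
    by (simp add: algebra_simps)
  also have "\<dots> \<le> 2 * C * r powr \<alpha>"
    using add_mono [OF leaf leaf] assms by fastforce
  finally have by_r: "norm ?D \<le> 2 * C * r powr \<alpha>" .
  have "norm ?D \<le> norm (K (a, b1) - K (a, b3)) + norm (K (a, b2) - K (a, b4))"
    using norm_triangle_ineq4 [of "K (a, b1) - K (a, b3)" "K (a, b2) - K (a, b4)"]
    by (simp add: algebra_simps)
  also have "\<dots> \<le> 2 * C * r' powr \<alpha>"
    using add_mono [OF leaf leaf] assms by fastforce
  finally have "norm ?D \<le> 2 * C * r' powr \<alpha>" .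
  with by_r show ?thesis by (simp add: min_def)
qed

lemma K_bounds_stable_diff:
  assumes K: "K_bounds \<alpha> \<beta> K C" and "0 \<le> \<alpha>" "\<alpha> \<le> 1" "1 \<le> M"
    and "norm (b - b') \<le> M * d"
  shows "norm (K (a, b) - K (a, b')) \<le> M * C * d powr \<alpha>"
proof -
  have C: "0 \<le> C" using K_bounds_nonneg [OF K] .
  have d: "0 \<le> d" using assms by (smt (verit) norm_ge_zero zero_le_mult_iff)
  have "norm (K (a, b) - K (a, b')) \<le> C * norm (b - b') powr \<alpha>"
    using K unfolding K_bounds_def by blast
  also have "\<dots> \<le> C * (M * d) powr \<alpha>"
    using assms C by (intro mult_left_mono powr_mono2) auto
  also have "\<dots> \<le> C * (M * d powr \<alpha>)"
    using assms C d by (intro mult_left_mono powr_scale_le) auto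
  finally show ?thesis by (simp add: algebra_simps)
qed

lemma K_bounds_unstable_diff:
  assumes K: "K_bounds \<alpha> \<beta> K C" and "0 \<le> \<beta>" "\<beta> \<le> \<alpha>" "\<alpha> \<le> 1" "1 \<le> M"
    and "norm (a - a') \<le> M * d" "norm (b - b') \<le> M * d"
  shows "norm (K (a, b) - K (a', b')) \<le> 3 * M * C * d powr \<beta>"
proof -
  have C: "0 \<le> C" using K_bounds_nonneg [OF K] .
  have d: "0 \<le> d" using assms by (smt (verit) norm_ge_zero zero_le_mult_iff)
  have "norm (K (a, b) - K (a', b)) \<le> C * norm (a - a') powr \<beta>"
    using K unfolding K_bounds_def by blast
  also have "\<dots> \<le> C * (M * d) powr \<beta>"
    using assms C by (intro mult_left_mono powr_mono2) auto
  finally have unstable: "norm (K (a, b) - K (a', b)) \<le> C * (M * d) powr \<beta>" .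
  have "norm (K (a', b) - K (a', b')) \<le> C * norm (b - b') powr \<alpha>"
    using K unfolding K_bounds_def by blast
  also have "\<dots> \<le> C * (M * d) powr \<alpha>"
    using assms C by (intro mult_left_mono powr_mono2) auto
  finally have "norm (K (a', b) - K (a', b')) \<le> C * (M * d) powr \<alpha>" .
  moreover have "C * (M * d) powr \<alpha> \<le> 2 * C * (M * d) powr \<alpha>"
    using C by (intro mult_right_mono) auto
  ultimately have "norm (K (a', b) - K (a', b')) \<le> 2 * C * min 1 ((M * d) powr \<alpha>)"
    using K_bounds_norm_diff_le [OF K, of "(a', b)" "(a', b')"] by (simp add: min_def)
  also have "\<dots> \<le> 2 * C * (M * d) powr \<beta>"
    using assms C d by (intro mult_left_mono min_one_powr_le_powr) auto
  finally have "norm (K (a, b) - K (a', b')) \<le> 3 * C * (M * d) powr \<beta>"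
    using unstable norm_triangle_ineq [of "K (a, b) - K (a', b)" "K (a', b) - K (a', b')"]
    by simp
  also have "\<dots> \<le> 3 * C * (M * d powr \<beta>)"
    using assms C d by (intro mult_left_mono powr_scale_le) auto
  finally show ?thesis by (simp add: algebra_simps)
qed

lemma K_bounds_mixed_diff:
  assumes K: "K_bounds \<alpha> \<beta> K C" and "0 \<le> \<beta>" "\<beta> \<le> \<alpha>" "\<alpha> \<le> 1" "1 \<le> M"
    and "norm (a - a') \<le> M * d" "norm (b1 - b2) \<le> M * d" "norm (b3 - b4) \<le> M * d"
    and "norm (b1 - b3) \<le> M * e" "norm (b2 - b4) \<le> M * e"
  shows "norm (K (a, b1) - K (a', b2) - K (a, b3) + K (a', b4))
           \<le> 3 * M * C * d powr \<beta> * e powr (\<alpha> - \<beta>)"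
proof -
  have C: "0 \<le> C" using K_bounds_nonneg [OF K] .
  have d: "0 \<le> d" and e: "0 \<le> e"
    using assms by (smt (verit) norm_ge_zero zero_le_mult_iff)+
  let ?P = "(M * d) powr \<beta> * (M * e) powr (\<alpha> - \<beta>)"
  have "norm (K (a, b1) - K (a', b1) - K (a, b3) + K (a', b3))
      \<le> C * norm (a - a') powr \<beta> * norm (b1 - b3) powr (\<alpha> - \<beta>)"
    using K unfolding K_bounds_def by blast
  also have "\<dots> \<le> C * ?P"
    unfolding mult.assoc using assms C by (intro mult_left_mono mult_mono powr_mono2) auto
  finally have unstable: "norm (K (a, b1) - K (a', b1) - K (a, b3) + K (a', b3)) \<le> C * ?P" .
  have "norm (K (a', b1) - K (a', b2) - K (a', b3) + K (a', b4))
      \<le> 2 * C * min ((M * d) powr \<alpha>) ((M * e) powr \<alpha>)"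
    using assms by (intro K_bounds_second_diff_on_leaf [OF K]) auto
  also have "\<dots> \<le> 2 * C * ?P"
    using assms C d e by (intro mult_left_mono min_powr_le_powr_mult_powr) auto
  finally have "norm (K (a, b1) - K (a', b2) - K (a, b3) + K (a', b4)) \<le> 3 * C * ?P"
    using unstable norm_triangle_ineq [of "K (a, b1) - K (a', b1) - K (a, b3) + K (a', b3)"
        "K (a', b1) - K (a', b2) - K (a', b3) + K (a', b4)"]
    by (simp add: algebra_simps)
  also have "\<dots> \<le> 3 * C * (M * (d powr \<beta> * e powr (\<alpha> - \<beta>)))"
    using assms C d e by (intro mult_left_mono powr_scale_mult_le) auto
  finally show ?thesis by (simp add: algebra_simps)
qed

lemma K_bounds_comp_stable_leaves:
  fixes \<Psi> :: "(real^'u) \<times> (real^'s) \<Rightarrow> (real^'u) \<times> (real^'s)"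
    and K :: "(real^'u) \<times> (real^'s) \<Rightarrow> real^'n^'m"
  assumes K: "K_bounds \<alpha> \<beta> K C" and "0 \<le> \<beta>" "\<beta> \<le> \<alpha>" "\<alpha> \<le> 1"
    and leaves: "sends_stable_leaves \<Psi>" and lip: "lipschitz_on M UNIV \<Psi>" and "1 \<le> M"
  shows "K_bounds \<alpha> \<beta> (K \<circ> \<Psi>) (3 * M * C)"
proof -
  define u where "u x = fst (\<Psi> (x, 0))" for x
  define s where "s x y = snd (\<Psi> (x, y))" for x y
  have \<Psi>: "\<Psi> (x, y) = (u x, s x y)" for x y
    using sends_stable_leaves_fst_eq [OF leaves, of x y 0] by (simp add: u_def s_def prod_eq_iff)
  have u: "norm (u x - u x') \<le> M * norm (x - x')" for x x'
    using lipschitz_on_UNIV_Pair_left [OF lip, of x 0 x'] norm_fst_le order_trans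
    by (fastforce simp: \<Psi>)
  have s_x: "norm (s x y - s x' y) \<le> M * norm (x - x')" for x x' y
    using lipschitz_on_UNIV_Pair_left [OF lip, of x y x'] norm_snd_le order_trans
    by (fastforce simp: \<Psi>)
  have s_y: "norm (s x y - s x y') \<le> M * norm (y - y')" for x y y'
    using lipschitz_on_UNIV_Pair_right [OF lip, of x y y'] norm_snd_le order_trans
    by (fastforce simp: \<Psi>)
  have C: "0 \<le> C" using K_bounds_nonneg [OF K] .
  have MC: "C \<le> M * C" "M * C \<le> 3 * M * C"
    using mult_right_mono [OF \<open>1 \<le> M\<close> C] C \<open>1 \<le> M\<close> by auto
  show ?thesis
    unfolding K_bounds_def
  proof (intro allI conjI)
    fix x x' y y'
    have "norm (K (\<Psi> (x, y))) \<le> C"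
      using K unfolding K_bounds_def by (metis prod.collapse)
    also have "\<dots> \<le> 3 * M * C"
      using MC by linarith
    finally show "norm ((K \<circ> \<Psi>) (x, y)) \<le> 3 * M * C" by simp
    show "norm ((K \<circ> \<Psi>) (x, y) - (K \<circ> \<Psi>) (x', y)) \<le> 3 * M * C * norm (x - x') powr \<beta>"
      using assms u s_x by (simp add: \<Psi> K_bounds_unstable_diff [OF K])
    have "norm ((K \<circ> \<Psi>) (x, y) - (K \<circ> \<Psi>) (x, y')) \<le> M * C * norm (y - y') powr \<alpha>"
      using assms s_y by (simp add: \<Psi> K_bounds_stable_diff [OF K])
    also have "\<dots> \<le> 3 * M * C * norm (y - y') powr \<alpha>"
      using MC C \<open>1 \<le> M\<close> by (intro mult_right_mono) auto
    finally show "norm ((K \<circ> \<Psi>) (x, y) - (K \<circ> \<Psi>) (x, y')) \<le> 3 * M * C * norm (y - y') powr \<alpha>" .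
    show "norm ((K \<circ> \<Psi>) (x, y) - (K \<circ> \<Psi>) (x', y) - (K \<circ> \<Psi>) (x, y') + (K \<circ> \<Psi>) (x', y'))
        \<le> 3 * M * C * norm (x - x') powr \<beta> * norm (y - y') powr (\<alpha> - \<beta>)"
      using assms u s_x s_y by (simp add: \<Psi> K_bounds_mixed_diff [OF K])
  qed
qed

lemma Knorm_le_scaled:
  assumes "K \<in> Kclass \<alpha> \<beta>" "0 < c"
    and scaled: "\<And>C. K_bounds \<alpha> \<beta> K C \<Longrightarrow> K_bounds \<alpha> \<beta> K' (c * C)"
  shows "K' \<in> Kclass \<alpha> \<beta> \<and> Knorm \<alpha> \<beta> K' \<le> c * Knorm \<alpha> \<beta> K"
proof
  obtain C where C: "K_bounds \<alpha> \<beta> K C" using assms(1) by (auto simp: Kclass_def)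
  then show "K' \<in> Kclass \<alpha> \<beta>" using scaled by (auto simp: Kclass_def)
  have bdd: "bdd_below {C. K_bounds \<alpha> \<beta> K' C}"
    using K_bounds_nonneg by (intro bdd_belowI) blast
  have "Knorm \<alpha> \<beta> K' / c \<le> Knorm \<alpha> \<beta> K"
    unfolding Knorm_def
  proof (rule cInf_greatest)
    show "{C. K_bounds \<alpha> \<beta> K C} \<noteq> {}" using C by auto
  next
    fix C assume "C \<in> {C. K_bounds \<alpha> \<beta> K C}"
    then have "Inf {C. K_bounds \<alpha> \<beta> K' C} \<le> c * C"
      using scaled bdd by (intro cInf_lower) auto
    then show "Inf {C. K_bounds \<alpha> \<beta> K' C} / c \<le> C"
      using \<open>0 < c\<close> by (simp add: divide_le_eq mult.commute)
  qed
  then show "Knorm \<alpha> \<beta> K' \<le> c * Knorm \<alpha> \<beta> K"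
    using \<open>0 < c\<close> by (simp add: divide_le_eq mult.commute)
qed

theorem mainTheorem11:
  fixes \<alpha> \<beta> L :: real
    and \<Psi> :: "(real^'u) \<times> (real^'s) \<Rightarrow> (real^'u) \<times> (real^'s)"
    and K :: "(real^'u) \<times> (real^'s) \<Rightarrow> real^'n^'m"
  assumes "0 < \<alpha>" "\<alpha> \<le> 1" "0 < \<beta>" "\<beta> < \<alpha>"
    and "sends_stable_leaves \<Psi>"
    and "\<exists>C. lipschitz_on C UNIV \<Psi>"
    and "L = best_lipschitz \<Psi>"
    and "K \<in> Kclass \<alpha> \<beta>"
  shows "K \<circ> \<Psi> \<in> Kclass \<alpha> \<beta> \<and> Knorm \<alpha> \<beta> (K \<circ> \<Psi>) \<le> 3 * max 1 L * Knorm \<alpha> \<beta> K"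
proof -
  have "lipschitz_on L UNIV \<Psi>"
    using assms(6,7) lipschitz_on_best_lipschitz by blast
  then have lip: "lipschitz_on (max 1 L) UNIV \<Psi>"
    by (rule lipschitz_on_le) auto
  have "K_bounds \<alpha> \<beta> (K \<circ> \<Psi>) (3 * max 1 L * C)" if "K_bounds \<alpha> \<beta> K C" for C
    using assms lip by (intro K_bounds_comp_stable_leaves [OF that]) auto
  then show ?thesis
    using assms(8) by (intro Knorm_le_scaled) auto
qed

end
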